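(* Let $0<\varepsilon\le 0.1$, let $\Box$ be a closed axis-parallel square of side length $\varepsilon$ with center $o$, and let $R\subseteq\Box$ be a nonempty circular domain. Then every ray emanating from $o$ intersects the boundary $\partial(R\oplus D)$ in exactly one point; consequently the map $\pi:\partial(R\oplus D)\to\mathbb{S}^1$, $\pi(p)=\overrightarrow{op}/\lVert\overrightarrow{op}\rVert$, is a homeomorphism.
   Context: A circular arc is a connected portion of a circle in $\mathbb{R}^2$ (segments included). A circular domain is a closed subset of $\mathbb{R}^2$ whose boundary consists of finitely many circular arcs intersecting only at their endpoints (finite point sets are also allowed). $D$ is the closed unit disk centered at the origin and $\oplus$ denotes Minkowski sum. *)

theory Defs
  imports "HOL-Analysis.Analysis"
begin

text \<open>The plane R^2 is modelled by the type complex.\<close>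

text \<open>A circular arc together with its set of endpoints: either a (possibly
degenerate) line segment, or a connected portion of a circle of positive
radius, parametrised by an angle interval of length at most 2 pi.\<close>
definition circ_arc :: "complex set \<Rightarrow> complex set \<Rightarrow> bool" where
  "circ_arc A E \<longleftrightarrow>
     (\<exists>a b. A = closed_segment a b \<and> E = {a, b}) \<or>
     (\<exists>c r \<alpha> \<beta>. r > 0 \<and> \<alpha> \<le> \<beta> \<and> \<beta> - \<alpha> \<le> 2 * pi \<and>
        A = (\<lambda>t. c + complex_of_real r * cis t) ` {\<alpha>..\<beta>} \<and>
        E = {c + complex_of_real r * cis \<alpha>, c + complex_of_real r * cis \<beta>})"

definition circular_domain :: "complex set \<Rightarrow> bool" where
  "circular_domain S \<longleftrightarrow> closed S \<and>
     (\<exists>arcs :: (complex set \<times> complex set) list.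
        (\<forall>i < length arcs. circ_arc (fst (arcs ! i)) (snd (arcs ! i))) \<and>
        frontier S = (\<Union>i < length arcs. fst (arcs ! i)) \<and>
        (\<forall>i < length arcs. \<forall>j < length arcs. i \<noteq> j \<longrightarrow>
           fst (arcs ! i) \<inter> fst (arcs ! j) \<subseteq> snd (arcs ! i) \<inter> snd (arcs ! j)))"

definition minkowski_sum :: "complex set \<Rightarrow> complex set \<Rightarrow> complex set" where
  "minkowski_sum A B = {a + b | a b. a \<in> A \<and> b \<in> B}"

definition axis_square :: "complex \<Rightarrow> real \<Rightarrow> complex set" where
  "axis_square ctr eps = {z. \<bar>Re z - Re ctr\<bar> \<le> eps / 2 \<and> \<bar>Im z - Im ctr\<bar> \<le> eps / 2}"

definition ray :: "complex \<Rightarrow> complex \<Rightarrow> complex set" where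
  "ray ctr u = {ctr + complex_of_real t * u | t. t \<ge> 0}"

end

theory Submission
  imports Defs
begin

text \<open>Every point of \<open>R\<close> lies within distance less than 1 of the centre \<open>o\<close>. Hence, for
\<open>p \<in> R \<oplus> D\<close> with \<open>dist r p \<le> 1\<close>, \<open>r \<in> R\<close>, the segment from \<open>o\<close> to \<open>p\<close> minus its endpoint \<open>p\<close>
lies in the open unit disk around \<open>r\<close>, so in the interior of \<open>R \<oplus> D\<close>. Thus the compact set
\<open>R \<oplus> D\<close> is strictly star-shaped about \<open>o\<close>: on each ray from \<open>o\<close> the farthest point of
\<open>R \<oplus> D\<close> is the only boundary point. The radial projection of the boundary is then a
continuous bijection from a compact set onto the circle, hence a homeomorphism.\<close>

lemma mem_minkowski_sum_cball:
  "z \<in> minkowski_sum R (cball 0 e) \<longleftrightarrow> (\<exists>r\<in>R. dist r z \<le> e)"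
proof
  assume "z \<in> minkowski_sum R (cball 0 e)"
  then obtain a b where "z = a + b" "a \<in> R" "b \<in> cball 0 e"
    by (auto simp: minkowski_sum_def)
  then show "\<exists>r\<in>R. dist r z \<le> e" by (intro bexI[of _ a]) (auto simp: dist_norm)
next
  assume "\<exists>r\<in>R. dist r z \<le> e"
  then obtain r where "r \<in> R" "dist r z \<le> e" by blast
  then have "z = r + (z - r) \<and> r \<in> R \<and> z - r \<in> cball 0 e"
    by (auto simp: dist_norm norm_minus_commute)
  then show "z \<in> minkowski_sum R (cball 0 e)" unfolding minkowski_sum_def by blast
qed

lemma compact_minkowski_sum:
  "compact A \<Longrightarrow> compact B \<Longrightarrow> compact (minkowski_sum A B)"
  unfolding minkowski_sum_def by (rule compact_sums)

lemma ball_subset_interior_minkowski_sum_cball: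
  "r \<in> R \<Longrightarrow> ball r e \<subseteq> interior (minkowski_sum R (cball 0 e))"
  by (rule interior_maximal) (auto simp: mem_minkowski_sum_cball intro!: bexI[of _ r])

lemma centre_in_interior_minkowski_sum_cball:
  assumes "R \<subseteq> ball c e" "R \<noteq> {}"
  shows "c \<in> interior (minkowski_sum R (cball 0 e))"
proof -
  obtain r where r: "r \<in> R" using assms(2) by blast
  with assms(1) have "c \<in> ball r e" by (auto simp: dist_commute)
  with ball_subset_interior_minkowski_sum_cball[OF r] show ?thesis by blast
qed

lemma open_segment_subset_interior_minkowski_sum_cball:
  assumes "R \<subseteq> ball c e" "p \<in> minkowski_sum R (cball 0 e)"
  shows "open_segment c p \<subseteq> interior (minkowski_sum R (cball 0 e))"
proof -
  obtain r where r: "r \<in> R" "dist r p \<le> e"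
    using assms(2) by (auto simp: mem_minkowski_sum_cball)
  have "dist c r < e" using r(1) assms(1) by auto
  then have "e > 0" by (meson le_less_trans zero_le_dist)
  with \<open>dist c r < e\<close> have "open_segment c p \<subseteq> ball r e"
    using in_interior_closure_convex_segment[of "cball r e" c p] r assms(1)
    by (auto simp: dist_commute)
  with ball_subset_interior_minkowski_sum_cball[OF r(1)] show ?thesis by blast
qed

lemma axis_square_subset_cball:
  "axis_square c eps \<subseteq> cball c eps"
proof
  fix z assume "z \<in> axis_square c eps"
  then have "\<bar>Re (z - c)\<bar> \<le> eps / 2" "\<bar>Im (z - c)\<bar> \<le> eps / 2"
    by (auto simp: axis_square_def)
  then show "z \<in> cball c eps"
    using cmod_le[of "z - c"] by (simp add: dist_norm norm_minus_commute)
qed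

lemma ex1_frontier_point_on_ray:
  fixes S :: "complex set"
  assumes S: "compact S" and c: "c \<in> interior S"
    and star: "\<And>p. p \<in> S \<Longrightarrow> open_segment c p \<subseteq> interior S" and u: "u \<noteq> 0"
  shows "\<exists>!p. p \<in> ray c u \<and> p \<in> frontier S"
proof -
  define p where "p t = c + complex_of_real t * u" for t
  have cont_p: "continuous (at t) p" for t unfolding p_def by (intro continuous_intros)
  define T where "T = {t. 0 \<le> t \<and> p t \<in> S}"
  have "T = {0..} \<inter> p -` S" unfolding T_def by auto
  then have "closed T"
    using S cont_p by (simp add: closed_Int continuous_closed_vimage compact_imp_closed)
  moreover have "bounded T"
  proof -
    obtain B where B: "\<forall>x\<in>S. dist c x \<le> B"
      using compact_imp_bounded[OF S] unfolding bounded_any_center[of S c] by blast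
    have "\<bar>t\<bar> \<le> B / cmod u" if "t \<in> T" for t
    proof -
      have "\<bar>t\<bar> * cmod u = dist c (p t)" by (simp add: p_def dist_norm norm_mult)
      also have "\<dots> \<le> B" using that B by (simp add: T_def)
      finally show ?thesis using u by (simp add: pos_le_divide_eq)
    qed
    then show ?thesis unfolding bounded_iff real_norm_def by blast
  qed
  ultimately have "compact T" by (simp add: compact_eq_bounded_closed)
  moreover have "0 \<in> T" using c interior_subset by (auto simp: T_def p_def)
  ultimately obtain m where m: "m \<in> T" "\<forall>t\<in>T. t \<le> m"
    using compact_attains_sup[of T] by blast
  have below_interior: "p t \<in> interior S" if "0 \<le> t" "t < m" for t
  proof (cases "t = 0")
    case True
    then show ?thesis using c by (simp add: p_def)
  next
    case False
    have "m > 0" using that by linarith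
    with False that have "0 < t / m" "t / m < 1" by simp_all
    moreover have "p t = (1 - t / m) *\<^sub>R c + (t / m) *\<^sub>R p m"
      using \<open>m > 0\<close> by (simp add: p_def scaleR_conv_of_real field_simps)
    moreover have "c \<noteq> p m" using u that by (simp add: p_def)
    ultimately have "p t \<in> open_segment c (p m)" unfolding in_segment by blast
    with star m(1) show ?thesis by (auto simp: T_def)
  qed
  have "p m \<notin> interior S"
  proof
    assume "p m \<in> interior S"
    moreover have "open (p -` interior S)"
      using cont_p by (simp add: continuous_open_vimage)
    ultimately obtain e where e: "e > 0" "ball m e \<subseteq> p -` interior S"
      using openE[of "p -` interior S" m] by blast
    moreover have "m + e / 2 \<in> ball m e" using e(1) by (simp add: dist_real_def)
    ultimately have "p (m + e / 2) \<in> S" using interior_subset by blast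
    moreover have "0 \<le> m + e / 2" using m(1) e(1) by (simp add: T_def)
    ultimately have "m + e / 2 \<in> T" by (simp add: T_def)
    with m(2) have "m + e / 2 \<le> m" by blast
    with e(1) show False by simp
  qed
  then have frontier_pm: "p m \<in> frontier S"
    using m(1) S by (simp add: T_def frontier_def compact_imp_closed)
  show ?thesis
  proof (rule ex1I[of _ "p m"])
    show "p m \<in> ray c u \<and> p m \<in> frontier S"
      using m(1) frontier_pm by (auto simp: ray_def T_def p_def)
  next
    fix q assume q: "q \<in> ray c u \<and> q \<in> frontier S"
    then obtain t where t: "0 \<le> t" "q = p t" by (auto simp: ray_def p_def)
    with q S have "t \<in> T" by (simp add: T_def frontier_def compact_imp_closed)
    then have "t \<le> m" using m(2) by blast
    moreover have "\<not> t < m" using below_interior[OF t(1)] q t by (auto simp: frontier_def)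
    ultimately show "q = p m" using t by simp
  qed
qed

lemma radial_projection_homeomorphism:
  fixes S :: "complex set"
  assumes S: "compact S" and c: "c \<notin> frontier S"
    and rays: "\<And>u. u \<noteq> 0 \<Longrightarrow> \<exists>!p. p \<in> ray c u \<and> p \<in> frontier S"
  shows "\<exists>g. homeomorphism (frontier S) (sphere 0 1)
           (\<lambda>p. (p - c) / complex_of_real (cmod (p - c))) g"
    (is "\<exists>g. homeomorphism _ _ ?f g")
proof (rule homeomorphism_compact)
  have on_ray: "p \<in> ray c (?f p)" if "p \<noteq> c" for p
    using that unfolding ray_def by (intro CollectI exI[of _ "cmod (p - c)"]) auto
  show "compact (frontier S)" using S by (rule compact_frontier)
  show "continuous_on (frontier S) ?f"
    using c by (intro continuous_intros) auto
  show "inj_on ?f (frontier S)"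
  proof
    fix p q assume pq: "p \<in> frontier S" "q \<in> frontier S" "?f p = ?f q"
    then have "p \<noteq> c" "q \<noteq> c" using c by auto
    then have "?f p \<noteq> 0" "p \<in> ray c (?f p)" "q \<in> ray c (?f p)"
      using on_ray[of p] on_ray[of q] pq(3) by auto
    with pq(1,2) rays show "p = q" by blast
  qed
  show "?f ` frontier S = sphere 0 1"
  proof
    show "?f ` frontier S \<subseteq> sphere 0 1"
      using c by (auto simp: norm_divide)
  next
    show "sphere 0 1 \<subseteq> ?f ` frontier S"
    proof
      fix v :: complex assume v: "v \<in> sphere 0 1"
      then have "v \<noteq> 0" by auto
      from rays[OF this] obtain p where p: "p \<in> ray c v" "p \<in> frontier S" by blast
      then obtain t where t: "0 \<le> t" "p = c + complex_of_real t * v" by (auto simp: ray_def)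
      have "t \<noteq> 0" using p(2) t c by auto
      with t v have "?f p = v" by (simp add: norm_mult)
      with p(2) show "v \<in> ?f ` frontier S" by blast
    qed
  qed
qed

theorem mainTheorem8:
  fixes eps :: real and ctr :: complex and R :: "complex set"
  assumes "0 < eps" and "eps \<le> 0.1"
    and "R \<subseteq> axis_square ctr eps" and "R \<noteq> {}" and "circular_domain R"
  shows "(\<forall>u. u \<noteq> 0 \<longrightarrow>
            (\<exists>!p. p \<in> ray ctr u \<and> p \<in> frontier (minkowski_sum R (cball 0 1))))
       \<and> (\<exists>g. homeomorphism (frontier (minkowski_sum R (cball 0 1))) (sphere 0 1)
               (\<lambda>p. (p - ctr) / complex_of_real (cmod (p - ctr))) g)"
proof -
  define S where "S = minkowski_sum R (cball 0 1)"
  have "cball ctr eps \<subseteq> ball ctr 1" using assms(2) by auto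
  then have R_ball: "R \<subseteq> ball ctr 1"
    using assms(3) axis_square_subset_cball by blast
  have "closed R" using assms(5) by (simp add: circular_domain_def)
  moreover have "bounded R" using R_ball by (rule bounded_subset[OF bounded_ball])
  ultimately have "compact R" by (simp add: compact_eq_bounded_closed)
  then have S: "compact S" unfolding S_def by (simp add: compact_minkowski_sum)
  have ctr: "ctr \<in> interior S"
    unfolding S_def by (rule centre_in_interior_minkowski_sum_cball[OF R_ball assms(4)])
  have "\<And>p. p \<in> S \<Longrightarrow> open_segment ctr p \<subseteq> interior S"
    unfolding S_def by (rule open_segment_subset_interior_minkowski_sum_cball[OF R_ball])
  note rays = ex1_frontier_point_on_ray[OF S ctr this]
  have "ctr \<notin> frontier S" using ctr by (simp add: frontier_def)
  note homeo = radial_projection_homeomorphism[OF S this rays]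
  show ?thesis
    unfolding S_def[symmetric] by (intro conjI allI impI rays homeo)
qed

end
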